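(* Let $(\mathbb{B}^n_1(\mathbf{0}),\mathsf{B},\mathscr{L}^n)$ be Berwald's metric space with Lebesgue measure, where $$\mathsf{B}(x,y)=\frac{\big(\sqrt{(1-|x|^2)|y|^2+\langle x,y\rangle^2}+\langle x,y\rangle\big)^2}{(1-|x|^2)^2\sqrt{(1-|x|^2)|y|^2+\langle x,y\rangle^2}}.$$ Define $w(x)=-\left[\ln\left(\frac{2-|x|}{1-|x|}\right)\right]^{-1/n}$ on $\mathbb{B}^n_1(\mathbf{0})$. Then $w\in W^{1,p}_0(\mathbb{B}^n_1(\mathbf{0}),\mathsf{B},\mathscr{L}^n)$ for every $p\in[1,+\infty)$.
   Context: For a Finsler metric $F$ on $M$ with co-metric $F^*(x,\eta)=\sup_{y\ne0}\eta(y)/F(x,y)$, a smooth positive measure $\mathfrak m$ and $p\in[1,\infty)$, set $\|u\|_{W^{1,p}_{\mathfrak m}}=(\int_M|u|^pd\mathfrak m)^{1/p}+(\int_MF^{*p}(du)\,d\mathfrak m)^{1/p}$ (possibly $+\infty$). $W^{1,p}_0(M,F,\mathfrak m)$ is the set of functions $u$ for which there exist $u_k\in C^\infty_0(M)$ with $\|u-u_k\|_{W^{1,p}_{\mathfrak m}}\to0$. *)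

theory Defs
  imports "HOL-Analysis.Analysis"
begin

definition cometric :: "('a::real_normed_vector \<Rightarrow> 'a \<Rightarrow> real) \<Rightarrow> 'a \<Rightarrow> ('a \<Rightarrow> real) \<Rightarrow> real" where
  "cometric F x \<eta> = (SUP y\<in>-{0}. \<eta> y / F x y)"

fun iter_dd :: "('a::real_normed_vector \<Rightarrow> real) \<Rightarrow> 'a list \<Rightarrow> 'a \<Rightarrow> real" where
  "iter_dd f [] = f"
| "iter_dd f (v # vs) = (\<lambda>x. frechet_derivative (iter_dd f vs) (at x) v)"

definition smooth_on :: "'a::real_normed_vector set \<Rightarrow> ('a \<Rightarrow> real) \<Rightarrow> bool" where
  "smooth_on S f \<longleftrightarrow> (\<forall>vs. \<forall>x\<in>S. iter_dd f vs differentiable (at x))"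

definition Cinf0 :: "'a::real_normed_vector set \<Rightarrow> ('a \<Rightarrow> real) set" where
  "Cinf0 M = {f. smooth_on M f \<and> compact (closure {x. f x \<noteq> 0}) \<and> closure {x. f x \<noteq> 0} \<subseteq> M}"

definition enn_root :: "real \<Rightarrow> ennreal \<Rightarrow> ennreal" where
  "enn_root p t = (if t = \<infinity> then \<infinity> else ennreal (enn2real t powr (1 / p)))"

(* Sobolev norm ||u||_{W^{1,p}_m} on M (possibly \<infinity>); du is the Frechet differential,
   taken as \<infinity> at points of non-differentiability. *)
definition sobolev_norm ::
  "('a::euclidean_space \<Rightarrow> 'a \<Rightarrow> real) \<Rightarrow> 'a set \<Rightarrow> 'a measure \<Rightarrow> real \<Rightarrow> ('a \<Rightarrow> real) \<Rightarrow> ennreal" where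
  "sobolev_norm F M m p u =
     enn_root p (\<integral>\<^sup>+ x \<in> M. ennreal (\<bar>u x\<bar> powr p) \<partial>m)
   + enn_root p (\<integral>\<^sup>+ x \<in> M. (if u differentiable (at x)
                     then ennreal (cometric F x (frechet_derivative u (at x)) powr p)
                     else \<infinity>) \<partial>m)"

definition W0 ::
  "('a::euclidean_space \<Rightarrow> 'a \<Rightarrow> real) \<Rightarrow> 'a set \<Rightarrow> 'a measure \<Rightarrow> real \<Rightarrow> ('a \<Rightarrow> real) set" where
  "W0 F M m p = {u. \<exists>v. (\<forall>k. v k \<in> Cinf0 M) \<and>
       (\<lambda>k. sobolev_norm F M m p (\<lambda>x. u x - v k x)) \<longlonglongrightarrow> 0}"

definition berwald :: "real^'n \<Rightarrow> real^'n \<Rightarrow> real" where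
  "berwald x y =
    (let a = 1 - (norm x)\<^sup>2; s = sqrt (a * (norm y)\<^sup>2 + (inner x y)\<^sup>2)
     in (s + inner x y)\<^sup>2 / (a\<^sup>2 * s))"

end

(*
  Write w = phi o norm with phi r = -(ln ((2 - r) / (1 - r))) powr e, e = -1/n; phi increases from
  phi 0 <= -1 to 0 as r -> 1.  The approximants are v_k = h_k o phi o norm, where h_k is a smoothing of
  t |-> min 0 (max (phi 0 + 5 eta_k) (t + 2 eta_k)) and eta_k -> 0.  Thus v_k is constant near the origin,
  where the norm is not smooth, and vanishes near the unit sphere, so v_k is a test function; and
  w - v_k = -2 eta_k outside a set E_k that shrinks to {0}, hence has measure tending to 0.
  The decisive estimate is for the gradient: d(w - v_k) at x is a radial covector kappa <x, _>, and the
  Berwald co-metric of such a covector is at most kappa |x| (1 - |x|)^2.  Since phi'(r) (1 - r)^2 is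
  bounded, this makes the co-metric of d(w - v_k) bounded uniformly in k, and it vanishes outside E_k.
*)
theory Submission
  imports Defs
begin

definition flat_exp :: "nat \<Rightarrow> real \<Rightarrow> real" where
  "flat_exp m u = (if 0 < u then exp (- inverse u) / u ^ m else 0)"

lemma flat_exp_nonneg: "flat_exp m u \<ge> 0"
  by (simp add: flat_exp_def)

lemma flat_exp_pos: "0 < u \<Longrightarrow> 0 < flat_exp m u"
  by (simp add: flat_exp_def)

lemma flat_exp_eq_0: "u \<le> 0 \<Longrightarrow> flat_exp m u = 0"
  by (simp add: flat_exp_def)

lemma flat_exp_tendsto_0: "(flat_exp m \<longlongrightarrow> 0) (at 0)"
proof -
  have "((\<lambda>x. x ^ m / exp x) \<longlongrightarrow> (0::real)) at_top"
    by (rule tendsto_power_div_exp_0)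
  moreover have "\<forall>\<^sub>F x in at_top. x ^ m / exp x = flat_exp m (inverse x)"
    using eventually_gt_at_top[of 0]
    by eventually_elim (simp add: flat_exp_def exp_minus field_simps power_inverse)
  ultimately have "(flat_exp m \<longlongrightarrow> 0) (at_right 0)"
    unfolding filterlim_at_right_to_top using tendsto_cong by fastforce
  moreover have "\<forall>\<^sub>F x in at_left 0. flat_exp m x = 0"
    by (simp add: eventually_at_left_field flat_exp_eq_0 exI[of _ "-1"])
  then have "(flat_exp m \<longlongrightarrow> 0) (at_left 0)"
    by (simp add: tendsto_eventually)
  ultimately show ?thesis
    by (simp add: filterlim_split_at)
qed

lemma flat_exp_has_real_derivative:
  "(flat_exp m has_real_derivative flat_exp (m + 2) u - real m * flat_exp (m + 1) u) (at u)"
proof (cases u "0::real" rule: linorder_cases)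
  case less
  have "\<forall>\<^sub>F x in nhds u. flat_exp m x = 0"
    using less by (intro eventually_nhds_in_open[of "{..<0}", THEN eventually_mono]) (auto simp: flat_exp_eq_0)
  then show ?thesis
    using less by (simp add: DERIV_cong_ev[OF refl _ refl] flat_exp_eq_0)
next
  case equal
  have "(\<lambda>y. (flat_exp m y - flat_exp m 0) / (y - 0)) = flat_exp (Suc m)"
    by (simp add: fun_eq_iff flat_exp_def field_simps)
  then show ?thesis
    using equal flat_exp_tendsto_0[of "Suc m"] by (simp add: has_field_derivative_iff flat_exp_eq_0)
next
  case greater
  have "((\<lambda>u. exp (- inverse u)) has_real_derivative exp (- inverse u) / u\<^sup>2) (at u)"
    using greater by (auto intro!: derivative_eq_intros simp: power2_eq_square field_simps)
  moreover have "((\<lambda>u. u ^ m) has_real_derivative real m * u ^ m / u) (at u)"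
    using DERIV_pow[of m u] greater by (cases m) simp_all
  ultimately have "((\<lambda>u. exp (- inverse u) / u ^ m) has_real_derivative
      (exp (- inverse u) / u\<^sup>2 * u ^ m - exp (- inverse u) * (real m * u ^ m / u)) / (u ^ m * u ^ m)) (at u)"
    using greater by (intro DERIV_divide) auto
  moreover have "(exp (- inverse u) / u\<^sup>2 * u ^ m - exp (- inverse u) * (real m * u ^ m / u)) / (u ^ m * u ^ m)
      = flat_exp (m + 2) u - real m * flat_exp (m + 1) u"
    using greater by (simp add: flat_exp_def field_simps power2_eq_square)
  moreover have "\<forall>\<^sub>F x in nhds u. flat_exp m x = exp (- inverse x) / x ^ m"
    using greater by (intro eventually_nhds_in_open[of "{0<..}", THEN eventually_mono]) (auto simp: flat_exp_def)
  ultimately show ?thesis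
    by (simp add: DERIV_cong_ev[OF refl _ refl])
qed

definition smooth_step :: "real \<Rightarrow> real" where
  "smooth_step t = flat_exp 0 t / (flat_exp 0 t + flat_exp 0 (1 - t))"

definition smooth_step_deriv :: "real \<Rightarrow> real" where
  "smooth_step_deriv t = (flat_exp 2 t * flat_exp 0 (1 - t) + flat_exp 0 t * flat_exp 2 (1 - t))
     / (flat_exp 0 t + flat_exp 0 (1 - t))\<^sup>2"

lemma smooth_step_denom_pos: "0 < flat_exp 0 t + flat_exp 0 (1 - t)"
  using flat_exp_pos[of t 0] flat_exp_pos[of "1 - t" 0] flat_exp_nonneg[of 0 t] flat_exp_nonneg[of 0 "1 - t"]
  by (cases "0 < t") auto

lemma smooth_step_eq_0: "t \<le> 0 \<Longrightarrow> smooth_step t = 0"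
  by (simp add: smooth_step_def flat_exp_eq_0)

lemma smooth_step_eq_1: "1 \<le> t \<Longrightarrow> smooth_step t = 1"
  using smooth_step_denom_pos[of t] by (simp add: smooth_step_def flat_exp_eq_0)

lemma smooth_step_nonneg: "0 \<le> smooth_step t"
  using smooth_step_denom_pos[of t] by (simp add: smooth_step_def flat_exp_nonneg)

lemma smooth_step_le_1: "smooth_step t \<le> 1"
  using smooth_step_denom_pos[of t] flat_exp_nonneg[of 0 "1 - t"] by (simp add: smooth_step_def)

lemma smooth_step_deriv_nonneg: "0 \<le> smooth_step_deriv t"
  by (simp add: smooth_step_deriv_def flat_exp_nonneg)

lemma smooth_step_deriv_eq_0: "t \<le> 0 \<or> 1 \<le> t \<Longrightarrow> smooth_step_deriv t = 0"
  by (auto simp: smooth_step_deriv_def flat_exp_eq_0)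

lemma smooth_step_has_real_derivative: "(smooth_step has_real_derivative smooth_step_deriv t) (at t)"
proof -
  have d: "(flat_exp 0 has_real_derivative flat_exp 2 u) (at u)" for u
    using flat_exp_has_real_derivative[of 0 u] by (simp add: numeral_2_eq_2)
  moreover have "((\<lambda>z. flat_exp 0 (1 - z)) has_real_derivative - flat_exp 2 (1 - t)) (at t)"
    by (rule DERIV_chain2[OF d, of "\<lambda>z. 1 - z" "-1", simplified]) (auto intro!: derivative_eq_intros)
  ultimately have "((\<lambda>t. flat_exp 0 t / (flat_exp 0 t + flat_exp 0 (1 - t))) has_real_derivative
      (flat_exp 2 t * (flat_exp 0 t + flat_exp 0 (1 - t)) - flat_exp 0 t * (flat_exp 2 t - flat_exp 2 (1 - t)))
        / ((flat_exp 0 t + flat_exp 0 (1 - t)) * (flat_exp 0 t + flat_exp 0 (1 - t)))) (at t)"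
    using smooth_step_denom_pos[of t]
    by (intro derivative_eq_intros) auto
  then show ?thesis
    by (simp add: smooth_step_def[abs_def] smooth_step_deriv_def power2_eq_square algebra_simps)
qed

lemma bdd_above_smooth_step_deriv: "bdd_above (range smooth_step_deriv)"
proof -
  have flat: "continuous_on A (flat_exp m)" for m A
    using flat_exp_has_real_derivative
    by (intro continuous_at_imp_continuous_on ballI DERIV_isCont) blast
  have reflected: "continuous_on A (\<lambda>t. flat_exp m (1 - t))" for m A
    by (rule continuous_on_compose2[OF flat[of UNIV]]) (auto intro: continuous_intros)
  have "continuous_on {0..1} smooth_step_deriv"
    unfolding smooth_step_deriv_def[abs_def] using smooth_step_denom_pos
    by (intro continuous_on_divide continuous_on_add continuous_on_mult continuous_on_power flat reflected)
      (auto simp: less_le)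
  then have "bdd_above (smooth_step_deriv ` {0..1})"
    by (intro bounded_imp_bdd_above compact_imp_bounded compact_continuous_image) auto
  then obtain M where "\<forall>t\<in>{0..1}. smooth_step_deriv t \<le> M"
    by (auto simp: bdd_above_def)
  then have "smooth_step_deriv t \<le> max M 0" for t
    using smooth_step_deriv_eq_0[of t] by (cases "t \<in> {0..1}") (auto simp: le_max_iff_disj)
  then show ?thesis
    by (meson bdd_aboveI2)
qed

lemma smooth_step_deriv_le_Sup: "smooth_step_deriv t \<le> (SUP s. smooth_step_deriv s)"
  by (rule cSUP_upper[OF UNIV_I bdd_above_smooth_step_deriv])

(* A smoothing of t \<mapsto> min 0 (max (a + 4 \<eta>) (t + 2 \<eta>)) that rounds off each corner
   within distance \<eta>. *)
definition smooth_clamp :: "real \<Rightarrow> real \<Rightarrow> real \<Rightarrow> real" where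
  "smooth_clamp \<eta> a t = (t + 2 * \<eta>) * smooth_step (- t / \<eta> - 1)
     + (t - a - 2 * \<eta>) * smooth_step ((t - a) / \<eta> - 1) + (a + 2 * \<eta> - t)"

definition smooth_clamp_deriv :: "real \<Rightarrow> real \<Rightarrow> real \<Rightarrow> real" where
  "smooth_clamp_deriv \<eta> a t =
     (let u = - t / \<eta> - 1; v = (t - a) / \<eta> - 1
      in smooth_step u - (1 - u) * smooth_step_deriv u + smooth_step v - (1 - v) * smooth_step_deriv v - 1)"

lemma smooth_clamp_has_real_derivative:
  assumes "0 < \<eta>"
  shows "(smooth_clamp \<eta> a has_real_derivative smooth_clamp_deriv \<eta> a t) (at t)"
proof -
  note step = DERIV_chain2[OF smooth_step_has_real_derivative]
  show ?thesis
    unfolding smooth_clamp_def[abs_def] using assms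
    by (auto intro!: derivative_eq_intros step simp: smooth_clamp_deriv_def Let_def field_simps)
qed

lemma smooth_clamp_deriv_le_1: "smooth_clamp_deriv \<eta> a t \<le> 1"
proof -
  have "0 \<le> (1 - u) * smooth_step_deriv u" for u
    using smooth_step_deriv_eq_0[of u] smooth_step_deriv_nonneg[of u]
    by (cases "u \<le> 0 \<or> 1 \<le> u") auto
  from this[of "- t / \<eta> - 1"] this[of "(t - a) / \<eta> - 1"]
  show ?thesis
    using smooth_step_le_1[of "- t / \<eta> - 1"] smooth_step_le_1[of "(t - a) / \<eta> - 1"]
    unfolding smooth_clamp_deriv_def Let_def by linarith
qed

lemma smooth_clamp_deriv_ge: "-1 - 2 * (SUP s. smooth_step_deriv s) \<le> smooth_clamp_deriv \<eta> a t"
proof -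
  have "(1 - u) * smooth_step_deriv u \<le> (SUP s. smooth_step_deriv s)" for u
  proof (cases "u \<le> 0 \<or> 1 \<le> u")
    case True
    then show ?thesis
      using smooth_step_deriv_eq_0 smooth_step_deriv_le_Sup[of u] by auto
  next
    case False
    then have "(1 - u) * smooth_step_deriv u \<le> smooth_step_deriv u"
      using smooth_step_deriv_nonneg[of u] by (auto intro: mult_left_le_one_le)
    then show ?thesis
      using smooth_step_deriv_le_Sup[of u] by linarith
  qed
  from this[of "- t / \<eta> - 1"] this[of "(t - a) / \<eta> - 1"]
  show ?thesis
    using smooth_step_nonneg[of "- t / \<eta> - 1"] smooth_step_nonneg[of "(t - a) / \<eta> - 1"]
    unfolding smooth_clamp_deriv_def Let_def by linarith
qed

lemma smooth_clamp_eq_low: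
  assumes "0 < \<eta>" "a + 4 * \<eta> \<le> 0" "t \<le> a + \<eta>"
  shows "smooth_clamp \<eta> a t = a + 4 * \<eta>"
proof -
  have "1 \<le> - t / \<eta> - 1" "(t - a) / \<eta> - 1 \<le> 0"
    using assms by (simp_all add: field_simps)
  then show ?thesis
    by (simp add: smooth_clamp_def smooth_step_eq_0 smooth_step_eq_1)
qed

lemma smooth_clamp_eq_high:
  assumes "0 < \<eta>" "a + 4 * \<eta> \<le> 0" "- \<eta> \<le> t"
  shows "smooth_clamp \<eta> a t = 0"
proof -
  have "- t / \<eta> - 1 \<le> 0" "1 \<le> (t - a) / \<eta> - 1"
    using assms by (simp_all add: field_simps)
  then show ?thesis
    by (simp add: smooth_clamp_def smooth_step_eq_0 smooth_step_eq_1)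
qed

lemma smooth_clamp_eq_mid:
  assumes "0 < \<eta>" "a + 2 * \<eta> \<le> t" "t \<le> - 2 * \<eta>"
  shows "smooth_clamp \<eta> a t = t + 2 * \<eta>" and "smooth_clamp_deriv \<eta> a t = 1"
proof -
  have "1 \<le> - t / \<eta> - 1" "1 \<le> (t - a) / \<eta> - 1"
    using assms by (simp_all add: field_simps)
  then show "smooth_clamp \<eta> a t = t + 2 * \<eta>" "smooth_clamp_deriv \<eta> a t = 1"
    by (simp_all add: smooth_clamp_def smooth_clamp_deriv_def smooth_step_eq_1 smooth_step_deriv_eq_0)
qed

lemma abs_diff_smooth_clamp_le:
  assumes "0 < \<eta>"
  shows "\<bar>t - smooth_clamp \<eta> a t\<bar> \<le> 4 * \<bar>t\<bar> + 2 * \<bar>a\<bar> + 6 * \<eta>"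
proof -
  have "\<bar>x * smooth_step y\<bar> \<le> \<bar>x\<bar>" for x y
    using smooth_step_nonneg[of y] smooth_step_le_1[of y] by (simp add: abs_mult mult_left_le)
  from this[of "t + 2 * \<eta>" "- t / \<eta> - 1"] this[of "t - a - 2 * \<eta>" "(t - a) / \<eta> - 1"]
  show ?thesis
    using assms unfolding smooth_clamp_def by arith
qed

definition derivatives_in :: "'a::real_normed_vector set \<Rightarrow> ('a \<Rightarrow> real) set \<Rightarrow> ('a \<Rightarrow> real) \<Rightarrow> bool" where
  "derivatives_in S C f \<longleftrightarrow>
     (\<exists>f'. (\<forall>x\<in>S. (f has_derivative f' x) (at x)) \<and> (\<forall>v. (\<lambda>x. f' x v) \<in> C))"

definition derivative_closed :: "'a::real_normed_vector set \<Rightarrow> ('a \<Rightarrow> real) set \<Rightarrow> bool" where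
  "derivative_closed S C \<longleftrightarrow> (\<forall>f\<in>C. derivatives_in S C f)"

lemma derivative_closed_constants: "derivative_closed S (range (\<lambda>c x. c))"
  unfolding derivative_closed_def derivatives_in_def by (auto intro!: exI[of _ "\<lambda>x v. 0"])

lemma iter_dd_in_derivative_closed:
  assumes "open S" and C: "derivative_closed S C" and "g \<in> C" and "\<forall>y\<in>S. f y = g y"
  shows "\<exists>h\<in>C. \<forall>y\<in>S. iter_dd f vs y = h y"
proof (induction vs)
  case Nil
  then show ?case using assms by auto
next
  case (Cons v vs)
  then obtain h where h: "h \<in> C" "\<forall>y\<in>S. iter_dd f vs y = h y" by blast
  then obtain h' where h': "\<forall>x\<in>S. (h has_derivative h' x) (at x)" "\<forall>v. (\<lambda>x. h' x v) \<in> C"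
    using C unfolding derivative_closed_def derivatives_in_def by blast
  have "iter_dd f (v # vs) y = h' y v" if "y \<in> S" for y
  proof -
    have "(iter_dd f vs has_derivative h' y) (at y)"
      using h'(1) h(2) \<open>open S\<close> that by (auto intro: has_derivative_transform_within_open)
    then show ?thesis by (simp add: frechet_derivative_at[symmetric])
  qed
  then show ?case
    using h'(2) by (intro bexI[of _ "\<lambda>x. h' x v"]) auto
qed

lemma smooth_on_if_locally_derivative_closed:
  assumes "\<And>x. x \<in> M \<Longrightarrow> \<exists>S C g. open S \<and> x \<in> S \<and> derivative_closed S C \<and> g \<in> C \<and> (\<forall>y\<in>S. f y = g y)"
  shows "smooth_on M f"
  unfolding smooth_on_def
proof (intro allI ballI)
  fix vs x assume "x \<in> M"
  then obtain S C g where S: "open S" "x \<in> S" "derivative_closed S C" "g \<in> C" "\<forall>y\<in>S. f y = g y"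
    using assms by blast
  then obtain h where h: "h \<in> C" "\<forall>y\<in>S. iter_dd f vs y = h y"
    using iter_dd_in_derivative_closed by blast
  then obtain h' where "(h has_derivative h' x) (at x)"
    using S(2,3) unfolding derivative_closed_def derivatives_in_def by blast
  then have "(iter_dd f vs has_derivative h' x) (at x)"
    using S(1,2) h(2) by (auto intro: has_derivative_transform_within_open)
  then show "iter_dd f vs differentiable (at x)"
    unfolding differentiable_def by blast
qed

inductive_set elementary :: "'a::real_inner set \<Rightarrow> ('a \<Rightarrow> real) set" for S where
  const: "(\<lambda>x. c) \<in> elementary S"
| inner: "(\<lambda>x. inner x v) \<in> elementary S"
| norm: "norm \<in> elementary S"
| inverse: "f \<in> elementary S \<Longrightarrow> (\<forall>x\<in>S. f x \<noteq> 0) \<Longrightarrow> (\<lambda>x. inverse (f x)) \<in> elementary S"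
| ln: "f \<in> elementary S \<Longrightarrow> (\<forall>x\<in>S. 0 < f x) \<Longrightarrow> (\<lambda>x. ln (f x)) \<in> elementary S"
| powr: "f \<in> elementary S \<Longrightarrow> (\<forall>x\<in>S. 0 < f x) \<Longrightarrow> (\<lambda>x. f x powr a) \<in> elementary S"
| flat_exp: "f \<in> elementary S \<Longrightarrow> (\<lambda>x. flat_exp m (f x)) \<in> elementary S"
| add: "f \<in> elementary S \<Longrightarrow> g \<in> elementary S \<Longrightarrow> (\<lambda>x. f x + g x) \<in> elementary S"
| mult: "f \<in> elementary S \<Longrightarrow> g \<in> elementary S \<Longrightarrow> (\<lambda>x. f x * g x) \<in> elementary S"

lemma elementary_uminus: "f \<in> elementary S \<Longrightarrow> (\<lambda>x. - f x) \<in> elementary S"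
  using elementary.mult[OF elementary.const[of "-1"]] by simp

lemma elementary_diff:
  "f \<in> elementary S \<Longrightarrow> g \<in> elementary S \<Longrightarrow> (\<lambda>x. f x - g x) \<in> elementary S"
  using elementary.add[OF _ elementary_uminus, of f S g] by simp

lemma elementary_divide:
  "f \<in> elementary S \<Longrightarrow> g \<in> elementary S \<Longrightarrow> (\<forall>x\<in>S. g x \<noteq> 0) \<Longrightarrow> (\<lambda>x. f x / g x) \<in> elementary S"
  using elementary.mult[OF _ elementary.inverse, of f S g] by (simp add: divide_inverse)

lemma elementary_divide_const: "f \<in> elementary S \<Longrightarrow> (\<lambda>x. f x / c) \<in> elementary S"
  using elementary.mult[OF _ elementary.const, of f S "inverse c"] by (simp add: divide_inverse)

lemmas elementary_intros =
  elementary.const elementary.inner elementary.norm elementary.flat_exp elementary.add elementary.mult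
  elementary_uminus elementary_diff elementary_divide_const

lemma derivatives_in_elementary_compose:
  assumes "derivatives_in S (elementary S) f"
    and "\<And>x. x \<in> S \<Longrightarrow> (g has_real_derivative g' (f x)) (at (f x))"
    and "(\<lambda>x. g' (f x)) \<in> elementary S"
  shows "derivatives_in S (elementary S) (\<lambda>x. g (f x))"
proof -
  obtain f' where f': "\<forall>x\<in>S. (f has_derivative f' x) (at x)" "\<forall>v. (\<lambda>x. f' x v) \<in> elementary S"
    using assms(1) unfolding derivatives_in_def by blast
  have "((\<lambda>x. g (f x)) has_derivative (\<lambda>v. g' (f x) * f' x v)) (at x)" if "x \<in> S" for x
    using has_derivative_compose[OF f'(1)[rule_format, OF that] assms(2)[OF that, unfolded has_field_derivative_def]]
    by simp
  moreover have "(\<lambda>x. g' (f x) * f' x v) \<in> elementary S" for v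
    using assms(3) f'(2) by (intro elementary.mult) auto
  ultimately show ?thesis
    unfolding derivatives_in_def by (intro exI[of _ "\<lambda>x v. g' (f x) * f' x v"]) auto
qed

lemma elementary_derivatives_in:
  assumes "0 \<notin> S" and "f \<in> elementary S"
  shows "derivatives_in S (elementary S) f"
  using assms(2)
proof (induction rule: elementary.induct)
  case (const c)
  show ?case
    unfolding derivatives_in_def by (auto intro!: exI[of _ "\<lambda>x v. 0"] elementary.const)
next
  case (inner w)
  show ?case
    unfolding derivatives_in_def
    by (auto intro!: exI[of _ "\<lambda>x v. inner v w"] derivative_eq_intros elementary.const)
next
  case norm
  have "(\<lambda>x. inner x v / norm x) \<in> elementary S" for v
    using \<open>0 \<notin> S\<close> by (intro elementary_divide elementary.inner elementary.norm) auto
  moreover have "(norm has_derivative (\<lambda>v. inner x v / norm x)) (at x)" if "x \<in> S" for x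
    using has_derivative_norm[of x] that \<open>0 \<notin> S\<close>
    by (auto simp: sgn_div_norm divide_inverse inner_commute mult.commute)
  ultimately show ?case
    unfolding derivatives_in_def by (intro exI[of _ "\<lambda>x v. inner x v / norm x"]) auto
next
  case (inverse f)
  then show ?case
    by (intro derivatives_in_elementary_compose[where g = inverse and g' = "\<lambda>y. - (inverse y * inverse y)"])
      (auto intro!: derivative_eq_intros elementary_intros elementary.inverse simp: power2_eq_square)
next
  case (ln f)
  then show ?case
    by (intro derivatives_in_elementary_compose[where g = ln and g' = inverse])
      (auto intro!: derivative_eq_intros elementary.inverse simp: divide_inverse)
next
  case (powr f a)
  then show ?case
    by (intro derivatives_in_elementary_compose[where g = "\<lambda>y. y powr a" and g' = "\<lambda>y. a * (y powr a / y)"])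
      (auto intro!: derivative_eq_intros elementary_intros elementary_divide elementary.powr simp: powr_diff)
next
  case (flat_exp f m)
  then show ?case
    using flat_exp_has_real_derivative
    by (intro derivatives_in_elementary_compose[where g = "flat_exp m"
          and g' = "\<lambda>y. flat_exp (m + 2) y - real m * flat_exp (m + 1) y"])
      (auto intro!: elementary_intros)
next
  case (add f g)
  then obtain f' g' where
    "\<forall>x\<in>S. (f has_derivative f' x) (at x)" "\<forall>v. (\<lambda>x. f' x v) \<in> elementary S"
    "\<forall>x\<in>S. (g has_derivative g' x) (at x)" "\<forall>v. (\<lambda>x. g' x v) \<in> elementary S"
    unfolding derivatives_in_def by blast
  then show ?case
    unfolding derivatives_in_def
    by (intro exI[of _ "\<lambda>x v. f' x v + g' x v"]) (auto intro!: has_derivative_add elementary.add)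
next
  case (mult f g)
  then obtain f' g' where
    "\<forall>x\<in>S. (f has_derivative f' x) (at x)" "\<forall>v. (\<lambda>x. f' x v) \<in> elementary S"
    "\<forall>x\<in>S. (g has_derivative g' x) (at x)" "\<forall>v. (\<lambda>x. g' x v) \<in> elementary S"
    unfolding derivatives_in_def by blast
  then show ?case
    unfolding derivatives_in_def
    by (intro exI[of _ "\<lambda>x v. f x * g' x v + f' x v * g x"])
      (auto intro!: has_derivative_mult elementary.add elementary.mult mult.hyps)
qed

lemma derivative_closed_elementary: "0 \<notin> S \<Longrightarrow> derivative_closed S (elementary S)"
  unfolding derivative_closed_def using elementary_derivatives_in by blast

lemma smooth_step_elementary: "f \<in> elementary S \<Longrightarrow> (\<lambda>x. smooth_step (f x)) \<in> elementary S"
  unfolding smooth_step_def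
  using smooth_step_denom_pos by (intro elementary_divide elementary_intros) (auto simp: less_le)

lemma smooth_clamp_elementary: "f \<in> elementary S \<Longrightarrow> (\<lambda>x. smooth_clamp \<eta> a (f x)) \<in> elementary S"
  unfolding smooth_clamp_def by (intro elementary_intros smooth_step_elementary)

lemma has_derivative_radial:
  fixes x :: "'a::real_inner"
  assumes "x \<noteq> 0" and "(\<psi> has_real_derivative D) (at (norm x))"
  shows "((\<lambda>y. \<psi> (norm y)) has_derivative (\<lambda>z. D / norm x * inner x z)) (at x)"
proof -
  have "(norm has_derivative (\<lambda>z. inner x z / norm x)) (at x)"
    using has_derivative_norm[OF assms(1)] by (simp add: sgn_div_norm inner_commute divide_inverse mult.commute)
  from has_derivative_compose[OF this assms(2)[unfolded has_field_derivative_def]]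
  show ?thesis
    by simp
qed

lemma set_nn_integral_le_indicator_bound:
  assumes "A \<in> sets M" "E \<in> sets M" and bound: "AE x in M. x \<in> A \<longrightarrow> f x \<le> c + d * indicator E x"
  shows "(\<integral>\<^sup>+x\<in>A. f x \<partial>M) \<le> c * emeasure M A + d * emeasure M E"
proof -
  have "(\<integral>\<^sup>+x\<in>A. f x \<partial>M) \<le> (\<integral>\<^sup>+x. c * indicator A x + d * indicator E x \<partial>M)"
    using bound by (intro nn_integral_mono_AE) (auto elim!: eventually_mono simp: indicator_def)
  also have "\<dots> = c * emeasure M A + d * emeasure M E"
    using assms(1,2) by (subst nn_integral_add) (auto simp: nn_integral_cmult_indicator)
  finally show ?thesis .
qed

lemma enn_root_tendsto_0:
  assumes "0 < p" and le: "\<And>k. I k \<le> J k" and J: "J \<longlonglongrightarrow> 0"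
  shows "(\<lambda>k. enn_root p (I k)) \<longlonglongrightarrow> 0"
proof (rule tendsto_sandwich[OF _ _ tendsto_const])
  have "(\<lambda>k. enn2real (J k) powr (1 / p)) \<longlonglongrightarrow> 0"
    using tendsto_enn2real[of J 0] J assms(1) by (intro tendsto_zero_powrI[OF _ tendsto_const]) auto
  then show "(\<lambda>k. ennreal (enn2real (J k) powr (1 / p))) \<longlonglongrightarrow> 0"
    using tendsto_ennrealI by fastforce
  have "\<forall>\<^sub>F k in sequentially. J k < 1"
    using J by (intro order_tendstoD(2)) auto
  then show "\<forall>\<^sub>F k in sequentially. enn_root p (I k) \<le> ennreal (enn2real (J k) powr (1 / p))"
  proof eventually_elim
    case (elim k)
    moreover have "(1::ennreal) < \<infinity>"
      by simp
    ultimately have "J k < \<infinity>" "I k < \<infinity>"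
      using le[of k] by (auto intro: le_less_trans less_trans)
    then have "enn2real (I k) powr (1 / p) \<le> enn2real (J k) powr (1 / p)"
      using le[of k] assms(1) by (intro powr_mono2 enn2real_mono) auto
    then show ?case
      using \<open>I k < \<infinity>\<close> by (auto simp: enn_root_def ennreal_leI)
  qed
qed auto

lemma berwald_pos:
  fixes x y :: "real^'n"
  assumes "norm x < 1" "y \<noteq> 0"
  shows "0 < berwald x y"
proof -
  define a where "a = 1 - (norm x)\<^sup>2"
  define s where "s = sqrt (a * (norm y)\<^sup>2 + (inner x y)\<^sup>2)"
  have "0 < a"
    using assms abs_square_less_1[of "norm x"] by (simp add: a_def)
  then have "sqrt ((inner x y)\<^sup>2) < s"
    unfolding s_def using assms by (intro real_sqrt_less_mono) simp
  then have "0 < s" "0 < s + inner x y"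
    by auto
  then show ?thesis
    unfolding berwald_def Let_def a_def[symmetric] s_def[symmetric] using \<open>0 < a\<close> by simp
qed

lemma berwald_radial_inequality:
  fixes r b Y s :: real
  assumes r: "0 < r" "r < 1" and "0 < b" and "0 \<le> Y" and cs: "b\<^sup>2 \<le> r\<^sup>2 * Y"
    and s: "s = sqrt ((1 - r\<^sup>2) * Y + b\<^sup>2)"
  shows "b * (1 - r\<^sup>2)\<^sup>2 * s \<le> r * (1 - r)\<^sup>2 * (s + b)\<^sup>2"
proof -
  have r2: "r\<^sup>2 < 1"
    using r by (simp add: abs_square_less_1)
  then have "0 \<le> s" and s2: "s\<^sup>2 = (1 - r\<^sup>2) * Y + b\<^sup>2"
    using s \<open>0 \<le> Y\<close> by simp_all
  have "b\<^sup>2 = (1 - r\<^sup>2) * b\<^sup>2 + r\<^sup>2 * b\<^sup>2"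
    by (simp add: algebra_simps)
  also have "\<dots> \<le> (1 - r\<^sup>2) * (r\<^sup>2 * Y) + r\<^sup>2 * b\<^sup>2"
    using cs r2 by (intro add_right_mono mult_left_mono) auto
  also have "\<dots> = (r * s)\<^sup>2"
    unfolding power_mult_distrib s2 by (simp add: algebra_simps)
  finally have "b \<le> r * s"
    by (rule power2_le_imp_le) (use r \<open>0 \<le> s\<close> in simp)
  define t where "t = b / r"
  have b: "b = r * t" and "0 < t" and "t \<le> s"
    using r \<open>0 < b\<close> \<open>b \<le> r * s\<close> by (simp_all add: t_def divide_le_eq mult.commute)
  \<comment> \<open>after substituting \<open>b = r t\<close>, the claim amounts to \<open>(s - t) (s - r^2 t) \<ge> 0\<close>\<close>
  have "r\<^sup>2 * t \<le> t"
    using \<open>0 < t\<close> r2 by (intro mult_left_le_one_le) auto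
  then have "0 \<le> (s - t) * (s - r\<^sup>2 * t)"
    using \<open>t \<le> s\<close> by (intro mult_nonneg_nonneg) auto
  also have "(s - t) * (s - r\<^sup>2 * t) = (s + r * t)\<^sup>2 - t * (1 + r)\<^sup>2 * s"
    by (simp add: power2_eq_square algebra_simps)
  finally have "r * (1 - r)\<^sup>2 * (t * (1 + r)\<^sup>2 * s) \<le> r * (1 - r)\<^sup>2 * (s + r * t)\<^sup>2"
    using r by (intro mult_left_mono) auto
  moreover have "(1 - r\<^sup>2)\<^sup>2 = (1 - r)\<^sup>2 * (1 + r)\<^sup>2"
    by (simp flip: power_mult_distrib add: algebra_simps power2_eq_square)
  ultimately show ?thesis
    by (simp add: b mult_ac)
qed

lemma radial_covector_div_berwald_le:
  fixes x y :: "real^'n"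
  assumes x: "norm x < 1" "x \<noteq> 0" and "y \<noteq> 0" and "0 \<le> \<kappa>"
  shows "\<kappa> * inner x y / berwald x y \<le> \<kappa> * norm x * (1 - norm x)\<^sup>2"
proof (cases "\<kappa> * inner x y \<le> 0")
  case True
  then have "\<kappa> * inner x y / berwald x y \<le> 0"
    using berwald_pos[OF x(1) \<open>y \<noteq> 0\<close>] by (simp add: divide_nonpos_pos)
  also have "\<dots> \<le> \<kappa> * norm x * (1 - norm x)\<^sup>2"
    using \<open>0 \<le> \<kappa>\<close> by simp
  finally show ?thesis .
next
  case False
  then have "0 < \<kappa>" "0 < inner x y"
    using \<open>0 \<le> \<kappa>\<close> by (auto simp: zero_less_mult_iff mult_le_0_iff)
  define a where "a = 1 - (norm x)\<^sup>2"
  define s where "s = sqrt (a * (norm y)\<^sup>2 + (inner x y)\<^sup>2)"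
  have "0 < a"
    using x abs_square_less_1[of "norm x"] by (simp add: a_def)
  have "0 < s"
    unfolding s_def using \<open>0 < a\<close> \<open>y \<noteq> 0\<close> by (intro real_sqrt_gt_zero add_pos_nonneg) auto
  have "(inner x y)\<^sup>2 \<le> (norm x * norm y)\<^sup>2"
    using Cauchy_Schwarz_ineq2[of x y] by (metis abs_ge_zero power2_abs power_mono)
  then have key: "inner x y * a\<^sup>2 * s \<le> norm x * (1 - norm x)\<^sup>2 * (s + inner x y)\<^sup>2"
    unfolding a_def using x \<open>0 < inner x y\<close>
    by (intro berwald_radial_inequality[of "norm x" "inner x y" "(norm y)\<^sup>2" s])
      (simp_all add: s_def a_def power_mult_distrib)
  have "0 < (s + inner x y)\<^sup>2"
    using \<open>0 < s\<close> \<open>0 < inner x y\<close> by simp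
  have "\<kappa> * inner x y / berwald x y = \<kappa> * (inner x y * a\<^sup>2 * s / (s + inner x y)\<^sup>2)"
    unfolding berwald_def Let_def a_def[symmetric] s_def[symmetric]
    using \<open>0 < s\<close> \<open>0 < a\<close> by (simp add: field_simps)
  also have "\<dots> \<le> \<kappa> * (norm x * (1 - norm x)\<^sup>2)"
    using key \<open>0 < (s + inner x y)\<^sup>2\<close> \<open>0 < \<kappa>\<close> by (intro mult_left_mono) (simp_all add: divide_le_eq)
  finally show ?thesis
    by (simp add: mult.assoc)
qed

lemma cometric_berwald_radial:
  fixes x :: "real^'n"
  assumes x: "norm x < 1" "x \<noteq> 0" and "0 \<le> \<kappa>"
  shows "cometric berwald x (\<lambda>z. \<kappa> * inner x z) \<le> \<kappa> * norm x * (1 - norm x)\<^sup>2"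
    and "0 \<le> cometric berwald x (\<lambda>z. \<kappa> * inner x z)"
proof -
  let ?B = "\<kappa> * norm x * (1 - norm x)\<^sup>2"
  have bound: "\<And>y. y \<in> - {0} \<Longrightarrow> \<kappa> * inner x y / berwald x y \<le> ?B"
    using radial_covector_div_berwald_le[OF x _ \<open>0 \<le> \<kappa>\<close>] by simp
  have "x \<in> - {0}"
    using \<open>x \<noteq> 0\<close> by simp
  then show "cometric berwald x (\<lambda>z. \<kappa> * inner x z) \<le> ?B"
    unfolding cometric_def by (intro cSUP_least bound) blast
  have "0 \<le> \<kappa> * inner x x / berwald x x"
    using berwald_pos[OF x] \<open>0 \<le> \<kappa>\<close> by simp
  also have "\<dots> \<le> cometric berwald x (\<lambda>z. \<kappa> * inner x z)"
    unfolding cometric_def using \<open>x \<in> - {0}\<close> by (rule cSUP_upper) (rule bdd_aboveI2, rule bound)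
  finally show "0 \<le> cometric berwald x (\<lambda>z. \<kappa> * inner x z)" .
qed

definition log_ratio :: "real \<Rightarrow> real" where
  "log_ratio r = ln ((2 - r) / (1 - r))"

definition profile :: "real \<Rightarrow> real \<Rightarrow> real" where
  "profile e r = - (log_ratio r powr e)"

definition profile_deriv :: "real \<Rightarrow> real \<Rightarrow> real" where
  "profile_deriv e r = - e * (log_ratio r powr e / log_ratio r) / ((1 - r) * (2 - r))"

lemma ln_2_le_log_ratio:
  assumes "0 \<le> r" "r < 1"
  shows "ln 2 \<le> log_ratio r" and "0 < r \<Longrightarrow> ln 2 < log_ratio r"
proof -
  have "2 \<le> (2 - r) / (1 - r)" and "0 < r \<Longrightarrow> 2 < (2 - r) / (1 - r)"
    using assms by (simp_all add: field_simps)
  then show "ln 2 \<le> log_ratio r" and "0 < r \<Longrightarrow> ln 2 < log_ratio r"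
    unfolding log_ratio_def by simp_all
qed

lemma log_ratio_pos: "0 \<le> r \<Longrightarrow> r < 1 \<Longrightarrow> 0 < log_ratio r"
  using ln_2_le_log_ratio(1)[of r] ln_gt_zero[of 2] by linarith

lemma log_ratio_0 [simp]: "log_ratio 0 = ln 2"
  by (simp add: log_ratio_def)

lemma profile_0: "profile e 0 = - (ln 2 powr e)"
  by (simp add: profile_def)

lemma profile_0_le_minus_1: "e \<le> 0 \<Longrightarrow> profile e 0 \<le> -1"
  using powr_mono'[of e 0 "ln 2"] ln_2_less_1 by (simp add: profile_0)

lemma profile_bounds:
  assumes "e < 0" "0 \<le> r" "r < 1"
  shows "profile e 0 \<le> profile e r" and "0 < r \<Longrightarrow> profile e 0 < profile e r" and "profile e r < 0"
proof -
  have "0 < ln (2::real)"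
    by simp
  then show "profile e 0 \<le> profile e r" "0 < r \<Longrightarrow> profile e 0 < profile e r"
    using ln_2_le_log_ratio[OF assms(2,3)] assms(1) powr_mono2'[of e "ln 2" "log_ratio r"]
      powr_less_mono2_neg[of e "ln 2" "log_ratio r"]
    by (simp_all add: profile_def)
  show "profile e r < 0"
    using log_ratio_pos[OF assms(2,3)] by (simp add: profile_def)
qed

lemma profile_has_real_derivative:
  assumes "0 \<le> r" "r < 1"
  shows "(profile e has_real_derivative profile_deriv e r) (at r)"
proof -
  have "(log_ratio has_real_derivative 1 / ((1 - r) * (2 - r))) (at r)"
    unfolding log_ratio_def[abs_def] using assms
    by (auto intro!: derivative_eq_intros simp: divide_simps)
  then show ?thesis
    unfolding profile_def[abs_def] using assms log_ratio_pos[OF assms]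
    by (auto intro!: derivative_eq_intros simp: profile_deriv_def powr_diff field_simps)
qed

lemma profile_deriv_nonneg: "e < 0 \<Longrightarrow> 0 \<le> r \<Longrightarrow> r < 1 \<Longrightarrow> 0 \<le> profile_deriv e r"
  using log_ratio_pos[of r] unfolding profile_deriv_def
  by (intro divide_nonneg_pos mult_nonneg_nonneg) auto

lemma profile_deriv_mult_square_le:
  assumes "e < 0" "0 \<le> r" "r < 1"
  shows "profile_deriv e r * (1 - r)\<^sup>2 \<le> - e * (ln 2 powr e / ln 2)"
proof -
  define q where "q = log_ratio r powr e / log_ratio r"
  have "0 < ln (2::real)"
    by simp
  have "q \<le> ln 2 powr e / ln 2"
    unfolding q_def using ln_2_le_log_ratio(1)[OF assms(2,3)] powr_mono2'[of e "ln 2" "log_ratio r"]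
      \<open>0 < ln 2\<close> assms(1)
    by (intro frac_le) auto
  moreover have "(1 - r) / (2 - r) \<le> 1" "0 \<le> q"
    using assms log_ratio_pos[OF assms(2,3)] by (simp_all add: q_def)
  moreover have "0 \<le> - e * (ln 2 powr e / ln 2)"
    using \<open>0 < ln 2\<close> assms(1) by (intro mult_nonneg_nonneg divide_nonneg_pos) auto
  ultimately have "- e * q * ((1 - r) / (2 - r)) \<le> - e * (ln 2 powr e / ln 2) * 1"
    using assms by (intro mult_mono mult_left_mono) auto
  moreover have "profile_deriv e r * (1 - r)\<^sup>2 = - e * q * ((1 - r) / (2 - r))"
    using assms by (simp add: profile_deriv_def q_def[symmetric] power2_eq_square)
  ultimately show ?thesis
    by simp
qed

lemma profile_tendsto_0:
  assumes "e < 0"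
  shows "(profile e \<longlongrightarrow> 0) (at_left 1)"
proof -
  have near_1: "\<forall>\<^sub>F r in at_left (1::real). r \<in> {0<..<1}"
    by (rule eventually_at_left_real) simp
  have "((\<lambda>r. 1 - r) \<longlongrightarrow> 0) (at_left (1::real))"
    using tendsto_diff[OF tendsto_const tendsto_ident_at, of 1 1 "{..<1}"] by simp
  moreover have "\<forall>\<^sub>F r in at_left (1::real). 0 < 1 - r"
    using near_1 by (rule eventually_mono) simp
  ultimately have "filterlim (\<lambda>r. 1 + inverse (1 - r)) at_top (at_left (1::real))"
    by (intro filterlim_tendsto_add_at_top[OF tendsto_const] filterlim_inverse_at_top)
  moreover have "\<forall>\<^sub>F r in at_left (1::real). (2 - r) / (1 - r) = 1 + inverse (1 - r)"
    using near_1 by (rule eventually_mono) (simp add: field_simps)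
  ultimately have "filterlim (\<lambda>r. (2 - r) / (1 - r)) at_top (at_left (1::real))"
    by (simp add: filterlim_cong[OF refl refl])
  then have "filterlim log_ratio at_top (at_left 1)"
    unfolding log_ratio_def[abs_def] by (rule filterlim_compose[OF ln_at_top])
  then have "((\<lambda>r. log_ratio r powr e) \<longlongrightarrow> 0) (at_left 1)"
    by (rule tendsto_neg_powr[OF assms])
  then show ?thesis
    unfolding profile_def[abs_def] using tendsto_minus by fastforce
qed

lemma profile_norm_elementary:
  assumes "S \<subseteq> ball 0 1"
  shows "(\<lambda>x. profile e (norm x)) \<in> elementary S"
proof -
  have "(\<lambda>x. (2 - norm x) / (1 - norm x)) \<in> elementary S"
    using assms by (intro elementary_divide elementary_intros) auto
  then have "(\<lambda>x. log_ratio (norm x)) \<in> elementary S"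
    unfolding log_ratio_def using assms by (intro elementary.ln) (auto simp: subset_iff)
  then show ?thesis
    unfolding profile_def using assms log_ratio_pos
    by (intro elementary_uminus elementary.powr) (auto simp: subset_iff)
qed

definition cutoff_width :: "nat \<Rightarrow> real" where
  "cutoff_width k = 1 / (real k + 5)"

definition cutoff_level :: "real \<Rightarrow> nat \<Rightarrow> real" where
  "cutoff_level e k = profile e 0 + cutoff_width k"

lemma cutoff_width_pos: "0 < cutoff_width k"
  by (simp add: cutoff_width_def)

lemma cutoff_width_Suc_le: "cutoff_width (Suc k) \<le> cutoff_width k"
  by (simp add: cutoff_width_def frac_le)

lemma cutoff_width_le: "cutoff_width k \<le> 1 / 5"
  by (simp add: cutoff_width_def frac_le)

lemma cutoff_width_tendsto_0: "cutoff_width \<longlonglongrightarrow> 0"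
proof -
  have "filterlim (\<lambda>k. real k + 5) at_top sequentially"
    using filterlim_tendsto_add_at_top[OF tendsto_const filterlim_real_sequentially, of "5::real"]
    by (simp add: add.commute)
  then show ?thesis
    unfolding cutoff_width_def[abs_def]
    by (intro tendsto_divide_0[OF tendsto_const] filterlim_at_top_imp_at_infinity)
qed

lemma cutoff_level_add_width_nonpos: "e \<le> 0 \<Longrightarrow> cutoff_level e k + 4 * cutoff_width k \<le> 0"
  using profile_0_le_minus_1[of e] cutoff_width_le[of k] by (simp add: cutoff_level_def)

definition profile_approx :: "real \<Rightarrow> nat \<Rightarrow> 'a::real_normed_vector \<Rightarrow> real" where
  "profile_approx e k x =
     (if norm x < 1 then smooth_clamp (cutoff_width k) (cutoff_level e k) (profile e (norm x)) else 0)"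

lemma profile_approx_const_near_0:
  assumes "e < 0"
  obtains d where "0 < d" "\<And>y::'a::real_normed_vector. norm y < d \<Longrightarrow>
    profile_approx e k y = cutoff_level e k + 4 * cutoff_width k"
proof -
  have "isCont (profile e) 0"
    using profile_has_real_derivative[of 0 e] by (auto intro: DERIV_isCont)
  then obtain d where "0 < d" and d: "\<And>r. \<bar>r\<bar> < d \<Longrightarrow> \<bar>profile e r - profile e 0\<bar> < cutoff_width k"
    using cutoff_width_pos unfolding isCont_def LIM_def dist_real_def
    by (metis cancel_comm_monoid_add_class.diff_cancel abs_zero diff_zero)
  show ?thesis
  proof
    show "0 < min d 1"
      using \<open>0 < d\<close> by simp
    fix y :: 'a
    assume "norm y < min d 1"
    then have "profile e (norm y) \<le> cutoff_level e k + cutoff_width k"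
      using d[of "norm y"] by (simp add: cutoff_level_def)
    then show "profile_approx e k y = cutoff_level e k + 4 * cutoff_width k"
      using \<open>norm y < min d 1\<close> cutoff_level_add_width_nonpos[of e k] assms cutoff_width_pos
      by (simp add: profile_approx_def smooth_clamp_eq_low)
  qed
qed

lemma smooth_on_profile_approx:
  fixes e :: real
  assumes "e < 0"
  shows "smooth_on (ball 0 1) (profile_approx e k :: 'a::real_inner \<Rightarrow> real)"
proof (rule smooth_on_if_locally_derivative_closed)
  fix x :: 'a
  assume x: "x \<in> ball 0 1"
  show "\<exists>S C g. open S \<and> x \<in> S \<and> derivative_closed S C \<and> g \<in> C \<and> (\<forall>y\<in>S. profile_approx e k y = g y)"
  proof (cases "x = 0")
    case True
    obtain d where "0 < d" and d: "\<And>y::'a. norm y < d \<Longrightarrow>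
        profile_approx e k y = cutoff_level e k + 4 * cutoff_width k"
      using profile_approx_const_near_0[OF assms] by blast
    show ?thesis
      using True \<open>0 < d\<close> d derivative_closed_constants
      by (intro exI[of _ "ball 0 d"] exI[of _ "range (\<lambda>c x. c)"]) auto
  next
    case False
    define S :: "'a set" where "S = ball 0 1 - {0}"
    have "(\<lambda>y. smooth_clamp (cutoff_width k) (cutoff_level e k) (profile e (norm y))) \<in> elementary S"
      by (intro smooth_clamp_elementary profile_norm_elementary) (auto simp: S_def)
    moreover have "open S" "x \<in> S" "derivative_closed S (elementary S)"
      using x False by (auto simp: S_def intro: derivative_closed_elementary)
    ultimately show ?thesis
      by (intro exI[of _ S] exI[of _ "elementary S"]) (auto simp: S_def profile_approx_def)
  qed
qed

lemma profile_approx_support: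
  assumes "e < 0"
  obtains R where "R < 1" "{x::'a::real_normed_vector. profile_approx e k x \<noteq> 0} \<subseteq> cball 0 R"
proof -
  have "\<forall>\<^sub>F r in at_left 1. - cutoff_width k < profile e r"
    using profile_tendsto_0[OF assms] cutoff_width_pos by (intro order_tendstoD(1)) auto
  then obtain b where "b < 1" and b: "\<And>r. b < r \<Longrightarrow> r < 1 \<Longrightarrow> - cutoff_width k < profile e r"
    unfolding eventually_at_left_field by blast
  have "profile_approx e k x = 0" if "b < norm x" for x :: 'a
    using b[OF that] cutoff_level_add_width_nonpos[of e k] assms cutoff_width_pos[of k]
    unfolding profile_approx_def by (auto intro!: smooth_clamp_eq_high less_imp_le)
  then have "{x::'a. profile_approx e k x \<noteq> 0} \<subseteq> cball 0 (max b 0)"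
    by force
  moreover have "max b 0 < 1"
    using \<open>b < 1\<close> by simp
  ultimately show ?thesis
    using that by blast
qed

lemma profile_approx_in_Cinf0:
  assumes "e < 0"
  shows "profile_approx e k \<in> Cinf0 (ball (0::'a::euclidean_space) 1)"
proof -
  obtain R where "R < 1" and R: "{x::'a. profile_approx e k x \<noteq> 0} \<subseteq> cball 0 R"
    using profile_approx_support[OF assms] by blast
  then have "closure {x::'a. profile_approx e k x \<noteq> 0} \<subseteq> cball 0 R"
    by (intro closure_minimal) auto
  moreover have "compact (closure {x::'a. profile_approx e k x \<noteq> 0})"
    using bounded_subset[OF bounded_cball R] by simp
  ultimately show ?thesis
    using \<open>R < 1\<close> smooth_on_profile_approx[OF assms] unfolding Cinf0_def by auto
qed

definition transition_set :: "real \<Rightarrow> nat \<Rightarrow> 'a::real_normed_vector set" where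
  "transition_set e k = {x \<in> ball 0 1. profile e (norm x) \<le> cutoff_level e k + 2 * cutoff_width k
                                      \<or> - 2 * cutoff_width k \<le> profile e (norm x)}"

lemma transition_set_sets: "(transition_set e k :: 'a::euclidean_space set) \<in> sets lebesgue"
proof -
  have [measurable]: "(\<lambda>x::'a. profile e (norm x)) \<in> borel_measurable borel"
    unfolding profile_def log_ratio_def by measurable
  have "(transition_set e k :: 'a set) \<in> sets borel"
    unfolding transition_set_def by measurable
  then show ?thesis
    by simp
qed

lemma transition_set_subset_ball: "transition_set e k \<subseteq> ball 0 1"
  by (auto simp: transition_set_def)

lemma decseq_transition_set: "decseq (transition_set e)"
proof (rule decseq_SucI)
  fix k
  show "transition_set e (Suc k) \<subseteq> transition_set e k"
    using cutoff_width_Suc_le[of k] by (auto simp: transition_set_def cutoff_level_def)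
qed

lemma emeasure_lebesgue_ball_finite: "emeasure lebesgue (ball (0::'a::euclidean_space) 1) < \<infinity>"
  using emeasure_lborel_ball_finite by simp

lemma Inter_transition_set_subset:
  assumes "e < 0"
  shows "(\<Inter>k. transition_set e k) \<subseteq> {0}"
proof
  fix x assume x: "x \<in> (\<Inter>k. transition_set e k)"
  show "x \<in> {0}"
  proof (rule ccontr)
    assume "x \<notin> {0}"
    define t where "t = profile e (norm x)"
    have "profile e 0 < t" "t < 0"
      using x \<open>x \<notin> {0}\<close> profile_bounds[OF assms, of "norm x"] by (auto simp: t_def transition_set_def)
    then have "\<forall>\<^sub>F k in sequentially. cutoff_width k < min ((t - profile e 0) / 3) (- t / 2)"
      by (intro order_tendstoD(2)[OF cutoff_width_tendsto_0]) simp
    then obtain k where "cutoff_width k < (t - profile e 0) / 3" "cutoff_width k < - t / 2"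
      by (auto dest: eventually_happens)
    then have "x \<notin> transition_set e k"
      by (auto simp: transition_set_def cutoff_level_def t_def[symmetric])
    with x show False
      by blast
  qed
qed

lemma emeasure_transition_set_tendsto_0:
  assumes "e < 0"
  shows "(\<lambda>k. emeasure lebesgue (transition_set e k :: 'a::euclidean_space set)) \<longlonglongrightarrow> 0"
proof -
  have "emeasure lebesgue (transition_set e k :: 'a set) < \<infinity>" for k
    by (rule le_less_trans[OF emeasure_mono[OF transition_set_subset_ball] emeasure_lebesgue_ball_finite]) simp
  then have "(\<lambda>k. emeasure lebesgue (transition_set e k :: 'a set))
      \<longlonglongrightarrow> emeasure lebesgue (\<Inter>k. transition_set e k :: 'a set)"
    using transition_set_sets by (intro Lim_emeasure_decseq[OF _ decseq_transition_set]) (auto simp: less_top)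
  moreover have "emeasure lebesgue (\<Inter>k. transition_set e k :: 'a set) = 0"
    using emeasure_mono[OF Inter_transition_set_subset[OF assms], of lebesgue] by simp
  ultimately show ?thesis
    by simp
qed

lemma profile_minus_approx_outside_transition_set:
  assumes "norm x < 1" "x \<notin> transition_set e k"
  shows "profile e (norm x) - profile_approx e k x = - 2 * cutoff_width k"
  using assms cutoff_width_pos[of k]
  by (simp add: transition_set_def profile_approx_def smooth_clamp_eq_mid)

lemma abs_profile_minus_approx_le:
  assumes "e < 0" "norm x < 1"
  shows "\<bar>profile e (norm x) - profile_approx e k x\<bar> \<le> 6 * \<bar>profile e 0\<bar> + 8"
proof -
  define t where "t = profile e (norm x)"
  have "profile e 0 \<le> t" "t < 0"
    using profile_bounds[OF assms(1) _ assms(2)] by (auto simp: t_def)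
  then have "4 * \<bar>t\<bar> + 2 * \<bar>cutoff_level e k\<bar> + 6 * cutoff_width k \<le> 6 * \<bar>profile e 0\<bar> + 8"
    using cutoff_width_pos[of k] cutoff_width_le[of k] profile_0_le_minus_1[of e] assms(1)
    by (simp add: cutoff_level_def)
  then show ?thesis
    using abs_diff_smooth_clamp_le[OF cutoff_width_pos[of k], of t "cutoff_level e k"] assms(2)
    by (simp add: t_def profile_approx_def)
qed

definition radial_slope_bound :: "real \<Rightarrow> real" where
  "radial_slope_bound e = (2 + 2 * (SUP s. smooth_step_deriv s)) * (- e * (ln 2 powr e / ln 2))"

lemma profile_minus_approx_has_derivative:
  fixes x :: "'a::real_inner"
  assumes e: "e < 0" and x: "0 < norm x" "norm x < 1"
  obtains \<kappa> where "((\<lambda>y. profile e (norm y) - profile_approx e k y) has_derivative (\<lambda>z. \<kappa> * inner x z)) (at x)"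
    and "0 \<le> \<kappa>" and "\<kappa> * norm x * (1 - norm x)\<^sup>2 \<le> radial_slope_bound e"
    and "x \<notin> transition_set e k \<Longrightarrow> \<kappa> = 0"
proof -
  define \<eta> where "\<eta> = cutoff_width k"
  define a where "a = cutoff_level e k"
  define r where "r = norm x"
  define h where "h = smooth_clamp_deriv \<eta> a (profile e r)"
  define \<kappa> where "\<kappa> = (1 - h) * profile_deriv e r / r"
  have r: "0 < r" "r < 1" and "0 < \<eta>"
    using x cutoff_width_pos by (auto simp: r_def \<eta>_def)
  have "(profile e has_real_derivative profile_deriv e r) (at r)"
    using r by (intro profile_has_real_derivative) auto
  then have "((\<lambda>s. profile e s - smooth_clamp \<eta> a (profile e s)) has_real_derivative
      (1 - h) * profile_deriv e r) (at r)"
    unfolding h_def using DERIV_diff[OF _ DERIV_chain2[OF smooth_clamp_has_real_derivative[OF \<open>0 < \<eta>\<close>]]]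
    by (fastforce simp: algebra_simps)
  then have "((\<lambda>y. profile e (norm y) - smooth_clamp \<eta> a (profile e (norm y))) has_derivative
      (\<lambda>z. \<kappa> * inner x z)) (at x)"
    using x unfolding \<kappa>_def r_def
    by (intro has_derivative_radial[where \<psi> = "\<lambda>s. profile e s - smooth_clamp \<eta> a (profile e s)"]) auto
  moreover have "profile e (norm y) - smooth_clamp \<eta> a (profile e (norm y)) = profile e (norm y) - profile_approx e k y"
    if "y \<in> ball 0 1" for y :: 'a
    using that by (simp add: profile_approx_def \<eta>_def a_def)
  ultimately have "((\<lambda>y. profile e (norm y) - profile_approx e k y) has_derivative (\<lambda>z. \<kappa> * inner x z)) (at x)"
    using x by (auto intro: has_derivative_transform_within_open[where s = "ball 0 1"])
  moreover have h: "0 \<le> 1 - h" "1 - h \<le> 2 + 2 * (SUP s. smooth_step_deriv s)"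
    using smooth_clamp_deriv_le_1[of \<eta> a "profile e r"] smooth_clamp_deriv_ge[of \<eta> a "profile e r"]
    by (simp_all add: h_def)
  moreover have pd: "0 \<le> profile_deriv e r" "profile_deriv e r * (1 - r)\<^sup>2 \<le> - e * (ln 2 powr e / ln 2)"
    using profile_deriv_nonneg[OF e] profile_deriv_mult_square_le[OF e] r by auto
  then have "0 \<le> \<kappa>"
    using h r by (simp add: \<kappa>_def)
  moreover have "\<kappa> * r * (1 - r)\<^sup>2 \<le> radial_slope_bound e"
  proof -
    have "\<kappa> * r * (1 - r)\<^sup>2 = (1 - h) * (profile_deriv e r * (1 - r)\<^sup>2)"
      using r by (simp add: \<kappa>_def)
    also have "\<dots> \<le> radial_slope_bound e"
      unfolding radial_slope_bound_def by (rule mult_mono) (use h pd in auto)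
    finally show ?thesis .
  qed
  moreover have "\<kappa> = 0" if "x \<notin> transition_set e k"
    using that x \<open>0 < \<eta>\<close>
    by (simp add: \<kappa>_def h_def transition_set_def r_def \<eta>_def a_def smooth_clamp_eq_mid)
  ultimately show ?thesis
    using that unfolding r_def by blast
qed

lemma abs_profile_minus_approx_powr_le:
  assumes "e < 0" "0 < p" "norm x < 1"
  shows "ennreal (\<bar>profile e (norm x) - profile_approx e k x\<bar> powr p)
    \<le> ennreal ((2 * cutoff_width k) powr p)
      + ennreal ((6 * \<bar>profile e 0\<bar> + 8) powr p) * indicator (transition_set e k) x"
proof (cases "x \<in> transition_set e k")
  case True
  then have "\<bar>profile e (norm x) - profile_approx e k x\<bar> powr p \<le> (6 * \<bar>profile e 0\<bar> + 8) powr p"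
    using abs_profile_minus_approx_le[OF assms(1,3)] assms(2) by (intro powr_mono2) auto
  then show ?thesis
    using True by (simp add: ennreal_leI add_increasing)
next
  case False
  then show ?thesis
    using profile_minus_approx_outside_transition_set[OF assms(3) False] cutoff_width_pos[of k] by simp
qed

lemma cometric_d_profile_minus_approx_powr_le:
  fixes x :: "real^'n" and k :: nat
  assumes "e < 0" "0 < p" "0 < norm x" "norm x < 1"
  defines "u \<equiv> \<lambda>y. profile e (norm y) - profile_approx e k y"
  shows "(if u differentiable (at x) then ennreal (cometric berwald x (frechet_derivative u (at x)) powr p) else \<infinity>)
    \<le> ennreal (radial_slope_bound e powr p) * indicator (transition_set e k) x"
proof -
  obtain \<kappa> where D: "(u has_derivative (\<lambda>z. \<kappa> * inner x z)) (at x)"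
    and "0 \<le> \<kappa>" and \<kappa>: "\<kappa> * norm x * (1 - norm x)\<^sup>2 \<le> radial_slope_bound e"
    and outside: "x \<notin> transition_set e k \<Longrightarrow> \<kappa> = 0"
    using profile_minus_approx_has_derivative[OF assms(1,3,4)] unfolding u_def by blast
  have x: "norm x < 1" "x \<noteq> 0"
    using assms(3,4) by auto
  have "u differentiable (at x)" "frechet_derivative u (at x) = (\<lambda>z. \<kappa> * inner x z)"
    using D frechet_derivative_at[OF D] by (auto simp: differentiable_def)
  moreover have "cometric berwald x (\<lambda>z. \<kappa> * inner x z) powr p \<le> radial_slope_bound e powr p"
    using cometric_berwald_radial[OF x \<open>0 \<le> \<kappa>\<close>] \<kappa> assms(2) by (auto intro: powr_mono2)
  moreover have "cometric berwald x (\<lambda>z. \<kappa> * inner x z) = 0" if "x \<notin> transition_set e k"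
    using cometric_berwald_radial[OF x order_refl] outside[OF that] by simp
  ultimately show ?thesis
    by (cases "x \<in> transition_set e k") (simp_all add: ennreal_leI)
qed

lemma Lp_norm_profile_minus_approx_tendsto_0:
  fixes e p :: real
  assumes "e < 0" "0 < p"
  shows "(\<lambda>k. enn_root p (\<integral>\<^sup>+x\<in>ball (0::'a::euclidean_space) 1.
            ennreal (\<bar>profile e (norm x) - profile_approx e k x\<bar> powr p) \<partial>lebesgue)) \<longlonglongrightarrow> 0"
proof (rule enn_root_tendsto_0[OF assms(2)])
  let ?B = "ball (0::'a) 1"
  let ?C = "ennreal ((6 * \<bar>profile e 0\<bar> + 8) powr p)"
  show "(\<integral>\<^sup>+x\<in>?B. ennreal (\<bar>profile e (norm x) - profile_approx e k x\<bar> powr p) \<partial>lebesgue)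
      \<le> ennreal ((2 * cutoff_width k) powr p) * emeasure lebesgue ?B
        + ?C * emeasure lebesgue (transition_set e k :: 'a set)" for k
    using abs_profile_minus_approx_powr_le[OF assms] transition_set_sets
    by (intro set_nn_integral_le_indicator_bound) auto
  have "(\<lambda>k. 2 * cutoff_width k) \<longlonglongrightarrow> 0"
    using tendsto_mult[OF tendsto_const cutoff_width_tendsto_0, of 2] by simp
  then have "(\<lambda>k. (2 * cutoff_width k) powr p) \<longlonglongrightarrow> 0"
    using cutoff_width_pos assms(2)
    by (intro tendsto_zero_powrI[OF _ tendsto_const] always_eventually) (auto intro: less_imp_le)
  then have "(\<lambda>k. ennreal ((2 * cutoff_width k) powr p)) \<longlonglongrightarrow> 0"
    using tendsto_ennrealI by fastforce
  then have "(\<lambda>k. emeasure lebesgue ?B * ennreal ((2 * cutoff_width k) powr p)) \<longlonglongrightarrow> 0"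
    using ennreal_tendsto_cmult[OF emeasure_lebesgue_ball_finite[unfolded infinity_ennreal_def]] by fastforce
  moreover have "(\<lambda>k. ?C * emeasure lebesgue (transition_set e k :: 'a set)) \<longlonglongrightarrow> 0"
    using ennreal_tendsto_cmult[OF _ emeasure_transition_set_tendsto_0[OF assms(1), where 'a = 'a]] by simp
  ultimately show "(\<lambda>k. ennreal ((2 * cutoff_width k) powr p) * emeasure lebesgue ?B
      + ?C * emeasure lebesgue (transition_set e k :: 'a set)) \<longlonglongrightarrow> 0"
    using tendsto_add[where a = 0 and b = 0] by (fastforce simp: mult.commute)
qed

lemma cometric_norm_profile_minus_approx_tendsto_0:
  fixes e p :: real
  assumes "e < 0" "0 < p"
  defines "u \<equiv> \<lambda>k x. profile e (norm x) - profile_approx e k x"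
  shows "(\<lambda>k. enn_root p (\<integral>\<^sup>+x\<in>ball (0::real^'n) 1.
            (if u k differentiable (at x) then ennreal (cometric berwald x (frechet_derivative (u k) (at x)) powr p)
             else \<infinity>) \<partial>lebesgue)) \<longlonglongrightarrow> 0"
proof (rule enn_root_tendsto_0[OF assms(2)])
  let ?E = "\<lambda>k. transition_set e k :: (real^'n) set"
  let ?C = "ennreal (radial_slope_bound e powr p)"
  let ?g = "\<lambda>k x. if u k differentiable (at x)
    then ennreal (cometric berwald x (frechet_derivative (u k) (at x)) powr p) else \<infinity>"
  have "AE x in lebesgue. (x::real^'n) \<noteq> 0"
    using AE_completion[OF AE_lborel_singleton[of "0::real^'n"]] by simp
  then have "AE x in lebesgue. x \<in> ball 0 1 \<longrightarrow> ?g k x \<le> 0 + ?C * indicator (?E k) x" for k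
  proof eventually_elim
    case (elim x)
    show ?case
    proof
      assume "x \<in> ball 0 1"
      then have "0 < norm x" "norm x < 1"
        using elim by auto
      from cometric_d_profile_minus_approx_powr_le[OF assms(1,2) this, of k]
      show "?g k x \<le> 0 + ?C * indicator (?E k) x"
        unfolding u_def by simp
    qed
  qed
  then show "(\<integral>\<^sup>+x\<in>ball 0 1. ?g k x \<partial>lebesgue)
      \<le> 0 * emeasure lebesgue (ball (0::real^'n) 1) + ?C * emeasure lebesgue (?E k)" for k
    by (intro set_nn_integral_le_indicator_bound transition_set_sets) simp_all
  show "(\<lambda>k. 0 * emeasure lebesgue (ball (0::real^'n) 1) + ?C * emeasure lebesgue (?E k)) \<longlonglongrightarrow> 0"
    using ennreal_tendsto_cmult[OF _ emeasure_transition_set_tendsto_0[OF assms(1), where 'a = "real^'n"]] by simp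
qed

lemma sobolev_norm_profile_minus_approx_tendsto_0:
  fixes e p :: real
  assumes "e < 0" "0 < p"
  shows "(\<lambda>k. sobolev_norm berwald (ball (0::real^'n) 1) lebesgue p
            (\<lambda>x. profile e (norm x) - profile_approx e k x)) \<longlonglongrightarrow> 0"
  unfolding sobolev_norm_def
  using tendsto_add[OF Lp_norm_profile_minus_approx_tendsto_0[OF assms] cometric_norm_profile_minus_approx_tendsto_0[OF assms]]
  by simp

theorem lemma3p6:
  fixes p :: real
  assumes "1 \<le> p"
  shows "(\<lambda>x::real^'n. - ((ln ((2 - norm x) / (1 - norm x))) powr (- 1 / real CARD('n))))
           \<in> W0 berwald (ball 0 1) lebesgue p"
proof -
  define e where "e = - 1 / real CARD('n)"
  have "e < 0"
    by (simp add: e_def)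
  have "(\<lambda>x::real^'n. - ((ln ((2 - norm x) / (1 - norm x))) powr (- 1 / real CARD('n))))
      = (\<lambda>x. profile e (norm x))"
    by (simp add: profile_def log_ratio_def e_def)
  moreover have "\<forall>k. profile_approx e k \<in> Cinf0 (ball (0::real^'n) 1)"
    using profile_approx_in_Cinf0[OF \<open>e < 0\<close>] by blast
  moreover have "(\<lambda>k. sobolev_norm berwald (ball (0::real^'n) 1) lebesgue p
      (\<lambda>x. profile e (norm x) - profile_approx e k x)) \<longlonglongrightarrow> 0"
    by (rule sobolev_norm_profile_minus_approx_tendsto_0[OF \<open>e < 0\<close>]) (use assms in simp)
  ultimately show ?thesis
    unfolding W0_def by auto
qed

end
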